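(* No tetrahedron $\mathcal T$ admits both a monostable weighting and a mono-unstable weighting: there do not exist $O,O'\in\operatorname{int}\mathcal T$ (equal or not) such that $(\mathcal T,O)$ is monostable and $(\mathcal T,O')$ is mono-unstable.
   Context: A weighted polyhedron is a pair $(\mathcal P,O)$ with $\mathcal P$ a convex polyhedron and $O\in\operatorname{int}\mathcal P$. $(\mathcal P,O)$ is in equilibrium on a face, edge or vertex $X$ if there exists $Q$ in the relative interior of $X$ (a vertex being its own relative interior) such that the plane perpendicular to $[O,Q]$ at $Q$ supports $\mathcal P$; equilibria on faces are stable, on vertices unstable. $(\mathcal P,O)$ is monostable if exactly one face carries an equilibrium, and mono-unstable if exactly one vertex carries an equilibrium. *)

theory Defs
  imports "HOL-Analysis.Analysis"
begin

definition perp_plane_supports :: "(real^3) set \<Rightarrow> real^3 \<Rightarrow> real^3 \<Rightarrow> bool" where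
  "perp_plane_supports P C Q \<longleftrightarrow> Q \<noteq> C \<and> Q \<in> P \<and>
     ((\<forall>x\<in>P. (x - Q) \<bullet> (Q - C) \<le> 0) \<or> (\<forall>x\<in>P. (x - Q) \<bullet> (Q - C) \<ge> 0))"

definition equilibrium_on :: "(real^3) set \<Rightarrow> real^3 \<Rightarrow> (real^3) set \<Rightarrow> bool" where
  "equilibrium_on P C X \<longleftrightarrow> (\<exists>Q\<in>rel_interior X. perp_plane_supports P C Q)"

definition weighted_polyhedron :: "(real^3) set \<Rightarrow> real^3 \<Rightarrow> bool" where
  "weighted_polyhedron P C \<longleftrightarrow> polytope P \<and> aff_dim P = 3 \<and> C \<in> interior P"

definition monostable :: "(real^3) set \<Rightarrow> real^3 \<Rightarrow> bool" where
  "monostable P C \<longleftrightarrow> weighted_polyhedron P C \<and>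
     (\<exists>!F. F face_of P \<and> aff_dim F = 2 \<and> equilibrium_on P C F)"

definition mono_unstable :: "(real^3) set \<Rightarrow> real^3 \<Rightarrow> bool" where
  "mono_unstable P C \<longleftrightarrow> weighted_polyhedron P C \<and>
     (\<exists>!v. v extreme_point_of P \<and> equilibrium_on P C {v})"

end

(*
  Let g v be the gradient of the barycentric coordinate of the vertex v. The g v sum to 0,
  and g u \<bullet> g w > 0 means that the dihedral angle between the facets opposite u and w is
  obtuse. If the facet opposite u carries no equilibrium, the foot of the perpendicular from
  the centre of mass C to its plane lies on the far side of the plane of the facet opposite
  some w with g u \<bullet> g w > 0, and C is strictly closer to that facet than to the facet
  opposite u. In a monostable tetrahedron this applies to all vertices but one, and these
  obtuse steps form a spanning tree; since no g a has positive inner product with all other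
  gradients, the tree is a path a-b-c-d. The edges at b form the basis dual to g a, g c, g d,
  and inverting their Gram matrix shows that all face angles at b, and likewise at c, are
  acute. But a vertex with only acute face angles always carries an equilibrium, so a
  mono-unstable tetrahedron has at most one such vertex.
*)
theory Submission
  imports Defs
begin

unbundle cross3_syntax

section \<open>Barycentric coordinates of a simplex\<close>

text \<open>\<open>g y\<close> is the gradient of the barycentric coordinate \<open>bary y\<close> of the vertex \<open>y\<close>:
  the inner normal of the facet opposite \<open>y\<close>, divided by the height of \<open>y\<close> over that facet.\<close>

locale simplex_gradients =
  fixes V :: "'a::euclidean_space set" and g :: "'a \<Rightarrow> 'a"
  assumes affine_independent: "\<not> affine_dependent V"
    and full_dim: "aff_dim V = DIM('a)"
    and gradient_edge: "\<And>x y. x \<in> V \<Longrightarrow> y \<in> V \<Longrightarrow> g x \<bullet> (y - x) = (if y = x then 0 else -1)"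
begin

definition bary :: "'a \<Rightarrow> 'a \<Rightarrow> real" where
  "bary y z = 1 + g y \<bullet> (z - y)"

lemma finite_V: "finite V"
  using affine_independent by (rule aff_independent_finite)

lemma card_V: "card V = DIM('a) + 1"
  using aff_dim_affine_independent[OF affine_independent] full_dim by simp

lemma bary_vertex: "x \<in> V \<Longrightarrow> y \<in> V \<Longrightarrow> bary x y = (if y = x then 1 else 0)"
  by (simp add: bary_def gradient_edge)

lemma bary_diff: "bary y z - bary y w = g y \<bullet> (z - w)"
  by (simp add: bary_def inner_diff_right)

lemma bary_affine:
  assumes "u + v = 1"
  shows "bary y (u *\<^sub>R z + v *\<^sub>R w) = u * bary y z + v * bary y w"
proof -
  have v: "v = 1 - u"
    using assms by simp
  show ?thesis
    unfolding bary_def v by (simp add: algebra_simps)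
qed

lemma bary_sum_combination: "(\<Sum>y\<in>V. bary y z) = 1 \<and> (\<Sum>y\<in>V. bary y z *\<^sub>R y) = z"
proof -
  let ?S = "{z. (\<Sum>y\<in>V. bary y z) = 1 \<and> (\<Sum>y\<in>V. bary y z *\<^sub>R y) = z}"
  have "affine ?S"
  proof (unfold affine_def, intro ballI allI impI)
    fix x w :: 'a and u v :: real
    assume "x \<in> ?S" "w \<in> ?S" "u + v = 1"
    then show "u *\<^sub>R x + v *\<^sub>R w \<in> ?S"
      by (simp add: bary_affine sum.distrib scaleR_add_left
          flip: sum_distrib_left scaleR_scaleR scaleR_sum_right)
  qed
  moreover have "V \<subseteq> ?S"
  proof
    fix x assume "x \<in> V"
    then have "(\<Sum>y\<in>V. bary y x) = (\<Sum>y\<in>V. if y = x then 1 else 0)"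
      and "(\<Sum>y\<in>V. bary y x *\<^sub>R y) = (\<Sum>y\<in>V. if y = x then x else 0)"
      by (auto intro!: sum.cong simp: bary_vertex)
    with \<open>x \<in> V\<close> show "x \<in> ?S" using finite_V by simp
  qed
  ultimately have "affine hull V \<subseteq> ?S"
    by (rule hull_minimal[rotated])
  then show ?thesis
    using full_dim aff_dim_eq_full by blast
qed

lemma bary_sum: "(\<Sum>y\<in>V. bary y z) = 1"
  using bary_sum_combination by blast

lemma bary_combination: "(\<Sum>y\<in>V. bary y z *\<^sub>R y) = z"
  using bary_sum_combination by blast

lemma bary_convex_combination:
  assumes "y \<in> V" "sum u V = 1"
  shows "bary y (\<Sum>x\<in>V. u x *\<^sub>R x) = u y"
proof -
  have "bary y (\<Sum>x\<in>V. u x *\<^sub>R x) = (\<Sum>x\<in>V. u x * bary y x)"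
    using assms(2)
    by (simp add: bary_def inner_diff_right inner_sum_right distrib_left right_diff_distrib
        sum.distrib sum_subtractf flip: sum_distrib_right)
  also have "\<dots> = u y"
    using assms(1) finite_V by (simp add: bary_vertex if_distrib cong: if_cong)
  finally show ?thesis .
qed

lemma bary_nonneg: "z \<in> convex hull V \<Longrightarrow> y \<in> V \<Longrightarrow> 0 \<le> bary y z"
  by (auto simp: convex_hull_finite[OF finite_V] bary_convex_combination)

lemma bary_pos_interior:
  assumes "z \<in> interior (convex hull V)" "y \<in> V"
  shows "0 < bary y z"
proof -
  have "z \<in> rel_interior (convex hull V)"
    using assms(1) interior_subset_rel_interior by blast
  with assms(2) show ?thesis
    by (auto simp: rel_interior_convex_hull_explicit[OF affine_independent] bary_convex_combination)
qed

lemma sum_gradients: "sum g V = 0"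
proof -
  have "sum g V \<bullet> z = 0" for z
  proof -
    have "(\<Sum>y\<in>V. bary y z - bary y 0) = 0"
      by (simp add: sum_subtractf bary_sum)
    then show ?thesis
      by (simp add: bary_diff inner_sum_left)
  qed
  then show ?thesis
    by (metis inner_eq_zero_iff)
qed

lemma edge_expansion:
  assumes "b \<in> V"
  shows "x = (\<Sum>y\<in>V-{b}. (g y \<bullet> x) *\<^sub>R (y - b))"
proof -
  have "x = (\<Sum>y\<in>V. bary y (b + x) *\<^sub>R (y - b))"
    by (simp add: scaleR_diff_right sum_subtractf bary_sum bary_combination flip: scaleR_sum_left)
  also have "\<dots> = (\<Sum>y\<in>V-{b}. bary y (b + x) *\<^sub>R (y - b))"
    using finite_V assms by (simp add: sum.remove)
  also have "\<dots> = (\<Sum>y\<in>V-{b}. (g y \<bullet> x) *\<^sub>R (y - b))"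
  proof (rule sum.cong)
    fix y assume "y \<in> V - {b}"
    then have "bary y (b + x) = bary y (b + x) - bary y b"
      using assms by (auto simp: bary_vertex)
    then show "bary y (b + x) *\<^sub>R (y - b) = (g y \<bullet> x) *\<^sub>R (y - b)"
      by (simp add: bary_diff)
  qed simp
  finally show ?thesis .
qed

lemma exists_other_vertex:
  assumes "y \<in> V"
  obtains x where "x \<in> V" "x \<noteq> y"
proof -
  have "card (V - {y}) = DIM('a)"
    using card_V finite_V assms by simp
  then have "V - {y} \<noteq> {}"
    by (metis DIM_positive card.empty less_irrefl)
  with that show ?thesis by blast
qed

lemma gradient_nonzero: "y \<in> V \<Longrightarrow> g y \<noteq> 0"
  by (metis exists_other_vertex gradient_edge inner_zero_left zero_neq_neg_one)

lemma gradient_inner_neg: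
  assumes "a \<in> V"
  obtains b where "b \<in> V" "b \<noteq> a" "g a \<bullet> g b < 0"
proof -
  have "g a \<bullet> g a + (\<Sum>b\<in>V-{a}. g a \<bullet> g b) = g a \<bullet> sum g V"
    using finite_V assms by (simp add: inner_sum_right inner_add_right sum.remove)
  then have "(\<Sum>b\<in>V-{a}. g a \<bullet> g b) = - (g a \<bullet> g a)"
    by (simp add: sum_gradients)
  moreover have "0 < g a \<bullet> g a"
    using gradient_nonzero[OF assms] by simp
  ultimately have "(\<Sum>b\<in>V-{a}. g a \<bullet> g b) < 0"
    by linarith
  then obtain b where "b \<in> V - {a}" "g a \<bullet> g b < 0"
    by (metis (no_types, lifting) not_less sum_nonneg)
  with that show ?thesis by blast
qed

lemma gradient_inner_edge:
  "x \<in> V \<Longrightarrow> y \<in> V \<Longrightarrow> b \<in> V \<Longrightarrow>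
    g x \<bullet> (y - b) = (if y = x then 1 else 0) - (if b = x then 1 else 0)"
  by (simp flip: bary_diff add: bary_vertex)

lemma gradients_not_parallel:
  assumes "x \<in> V" "y \<in> V" "x \<noteq> y"
  shows "g x \<bullet> g y < norm (g x) * norm (g y)"
proof -
  have "g x \<bullet> g y \<noteq> norm (g x) * norm (g y)"
  proof
    assume "g x \<bullet> g y = norm (g x) * norm (g y)"
    then have "norm (g x) *\<^sub>R g y = norm (g y) *\<^sub>R g x"
      by (simp add: norm_cauchy_schwarz_eq)
    then have "norm (g x) * (g y \<bullet> (y - x)) = norm (g y) * (g x \<bullet> (y - x))"
      by (metis inner_scaleR_left)
    then have "norm (g x) = - norm (g y)"
      using assms by (simp add: gradient_inner_edge)
    moreover have "0 < norm (g x)" "0 < norm (g y)"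
      using gradient_nonzero assms by auto
    ultimately show False
      by linarith
  qed
  with norm_cauchy_schwarz[of "g x" "g y"] show ?thesis
    by linarith
qed

lemma facet_face: "u \<in> V \<Longrightarrow> convex hull (V - {u}) face_of convex hull V"
  using face_of_convex_hull_affine_independent[OF affine_independent] by blast

lemma aff_dim_facet:
  assumes "u \<in> V"
  shows "aff_dim (convex hull (V - {u})) = DIM('a) - 1"
proof -
  have "int (card (V - {u})) = aff_dim (V - {u}) + 1"
    using affine_independent_Diff[OF affine_independent] by (rule aff_dim_affine_independent)
  moreover have "card (V - {u}) = DIM('a)"
    using card_V finite_V assms by simp
  ultimately show ?thesis
    by (simp add: aff_dim_convex_hull)
qed

lemma facet_inj:
  assumes "u \<in> V" "u' \<in> V" "convex hull (V - {u}) = convex hull (V - {u'})"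
  shows "u = u'"
proof (rule ccontr)
  assume "u \<noteq> u'"
  then have "u \<in> convex hull (V - {u})"
    using assms by (simp add: hull_inc)
  then have "u \<in> affine hull (V - {u})"
    using convex_hull_subset_affine_hull by blast
  with assms(1) affine_independent show False
    by (auto simp: affine_dependent_def)
qed

lemma rel_interior_facet:
  assumes "u \<in> V" "bary u q = 0" "\<And>w. w \<in> V - {u} \<Longrightarrow> 0 < bary w q"
  shows "q \<in> rel_interior (convex hull (V - {u}))"
proof -
  have "sum (\<lambda>w. bary w q) (V - {u}) = 1"
    using bary_sum[of q] unfolding sum.remove[OF finite_V assms(1)] assms(2) by simp
  moreover have "(\<Sum>w\<in>V - {u}. bary w q *\<^sub>R w) = q"
    using bary_combination[of q] unfolding sum.remove[OF finite_V assms(1)] assms(2) by simp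
  ultimately show ?thesis
    using assms(3)
    unfolding rel_interior_convex_hull_explicit[OF affine_independent_Diff[OF affine_independent]]
    by (intro CollectI exI[of _ "\<lambda>w. bary w q"]) simp
qed

end

lemma facet_gradient_exists:
  fixes V :: "'a::euclidean_space set"
  assumes indep: "\<not> affine_dependent V" and full: "aff_dim V = DIM('a)" and "y \<in> V"
  obtains G where "\<And>x. x \<in> V \<Longrightarrow> G \<bullet> (x - y) = (if x = y then 0 else -1)"
proof -
  have "card V = DIM('a) + 1"
    using aff_dim_affine_independent[OF indep] full by simp
  then have "card (V - {y}) = DIM('a)"
    using aff_independent_finite[OF indep] \<open>y \<in> V\<close> by simp
  moreover have "int (card (V - {y})) = aff_dim (V - {y}) + 1"
    using affine_independent_Diff[OF indep] by (rule aff_dim_affine_independent)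
  ultimately have "aff_dim (V - {y}) < DIM('a)"
    by linarith
  then obtain a b where "a \<noteq> 0" and facet: "V - {y} \<subseteq> {x. a \<bullet> x = b}"
    by (rule aff_lowdim_subset_hyperplane)
  have "a \<bullet> y \<noteq> b"
  proof
    assume "a \<bullet> y = b"
    with facet have "aff_dim V \<le> aff_dim {x. a \<bullet> x = b}"
      by (intro aff_dim_subset) auto
    with \<open>a \<noteq> 0\<close> full show False by simp
  qed
  show ?thesis
  proof
    fix x assume "x \<in> V"
    show "((1 / (a \<bullet> y - b)) *\<^sub>R a) \<bullet> (x - y) = (if x = y then 0 else -1)"
    proof (cases "x = y")
      case False
      with facet \<open>x \<in> V\<close> have "a \<bullet> (x - y) = - (a \<bullet> y - b)"
        by (auto simp: inner_diff_right)
      moreover have "a \<bullet> y - b \<noteq> 0"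
        using \<open>a \<bullet> y \<noteq> b\<close> by simp
      ultimately show ?thesis
        using False by (simp add: field_simps)
    qed simp
  qed
qed

lemma simplex_gradients_exist:
  fixes V :: "'a::euclidean_space set"
  assumes "\<not> affine_dependent V" "aff_dim V = DIM('a)"
  obtains g where "simplex_gradients V g"
proof -
  have "\<forall>y\<in>V. \<exists>G. \<forall>x\<in>V. G \<bullet> (x - y) = (if x = y then 0 else -1)"
  proof
    fix y assume "y \<in> V"
    then obtain G where "\<And>x. x \<in> V \<Longrightarrow> G \<bullet> (x - y) = (if x = y then 0 else -1)"
      using facet_gradient_exists[OF assms] by blast
    then show "\<exists>G. \<forall>x\<in>V. G \<bullet> (x - y) = (if x = y then 0 else -1)"
      by blast
  qed
  then obtain g where "\<forall>y\<in>V. \<forall>x\<in>V. g y \<bullet> (x - y) = (if x = y then 0 else -1)"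
    by (rule bchoice[THEN exE])
  then have "simplex_gradients V g"
    using assms by unfold_locales auto
  then show ?thesis by (rule that)
qed

section \<open>Equilibria at acute vertices\<close>

lemma convex_hull_inner_le_vertex:
  fixes S :: "'a::real_inner set"
  assumes "x \<in> convex hull S"
  obtains y where "y \<in> S" "a \<bullet> x \<le> a \<bullet> y"
proof (rule ccontr)
  assume "\<not> thesis"
  with that have "S \<subseteq> {z. a \<bullet> z < a \<bullet> x}" by force
  then have "convex hull S \<subseteq> {z. a \<bullet> z < a \<bullet> x}"
    by (rule hull_minimal) (rule convex_halfspace_lt)
  with assms show False by blast
qed

lemma obtuse_angle_at_unsupported_vertex:
  fixes V :: "(real^3) set"
  assumes "u \<in> V" "C \<in> convex hull V" "u \<noteq> C"
    and "\<not> perp_plane_supports (convex hull V) C u"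
  obtains y z where "y \<in> V" "z \<in> V" "(y - u) \<bullet> (z - u) < 0"
proof -
  have "u \<in> convex hull V"
    using assms(1) by (rule hull_inc)
  with assms(3,4) obtain x where x: "x \<in> convex hull V" "0 < (x - u) \<bullet> (u - C)"
    by (auto simp: perp_plane_supports_def not_le)
  obtain y where "y \<in> V" "(u - C) \<bullet> x \<le> (u - C) \<bullet> y"
    using x(1) by (rule convex_hull_inner_le_vertex)
  moreover have "(x - u) \<bullet> (u - C) = (u - C) \<bullet> x - (u - C) \<bullet> u"
    "(y - u) \<bullet> (u - C) = (u - C) \<bullet> y - (u - C) \<bullet> u"
    by (simp_all add: inner_commute inner_diff_right)
  ultimately have y: "0 < (y - u) \<bullet> (u - C)"
    using x(2) by linarith
  obtain z where "z \<in> V" "(u - y) \<bullet> C \<le> (u - y) \<bullet> z"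
    using assms(2) by (rule convex_hull_inner_le_vertex)
  moreover have "(y - u) \<bullet> (z - u) = (u - y) \<bullet> u - (u - y) \<bullet> z"
    "(y - u) \<bullet> (u - C) = (u - y) \<bullet> C - (u - y) \<bullet> u"
    by (simp_all add: inner_commute inner_diff_right)
  ultimately have "(y - u) \<bullet> (z - u) < 0"
    using y by linarith
  with \<open>y \<in> V\<close> \<open>z \<in> V\<close> that show ?thesis by blast
qed

definition acute_vertex :: "'a::real_inner set \<Rightarrow> 'a \<Rightarrow> bool" where
  "acute_vertex V b \<longleftrightarrow> (\<forall>y\<in>V - {b}. \<forall>z\<in>V - {b}. 0 < (y - b) \<bullet> (z - b))"

lemma equilibrium_at_acute_vertex:
  fixes V :: "(real^3) set"
  assumes "\<not> affine_dependent V" "C \<in> interior (convex hull V)" "u \<in> V" "acute_vertex V u"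
  shows "equilibrium_on (convex hull V) C {u}"
proof (rule ccontr)
  assume "\<not> equilibrium_on (convex hull V) C {u}"
  then have unsupported: "\<not> perp_plane_supports (convex hull V) C u"
    by (simp add: equilibrium_on_def)
  have "u extreme_point_of convex hull V"
    using assms(1,3) extreme_point_of_convex_hull_affine_independent by blast
  then have "u \<noteq> C"
    using assms(2) extreme_point_not_in_interior by blast
  moreover have "C \<in> convex hull V"
    using assms(2) interior_subset by blast
  ultimately obtain y z where "y \<in> V" "z \<in> V" "(y - u) \<bullet> (z - u) < 0"
    using obtuse_angle_at_unsupported_vertex[OF assms(3)] unsupported by blast
  moreover from this have "y \<noteq> u" "z \<noteq> u"
    by auto
  ultimately show False
    using assms(4) unfolding acute_vertex_def by force
qed

lemma mono_unstable_acute_vertex_unique: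
  fixes V :: "(real^3) set"
  assumes "\<not> affine_dependent V" "mono_unstable (convex hull V) C"
    and "b \<in> V" "acute_vertex V b" "c \<in> V" "acute_vertex V c"
  shows "b = c"
proof -
  have "C \<in> interior (convex hull V)"
    using assms(2) by (simp add: mono_unstable_def weighted_polyhedron_def)
  moreover have "v extreme_point_of convex hull V" if "v \<in> V" for v
    using assms(1) that extreme_point_of_convex_hull_affine_independent by blast
  ultimately show ?thesis
    using assms(2-) equilibrium_at_acute_vertex[OF assms(1)] unfolding mono_unstable_def by metis
qed

section \<open>Acute vertices of a monostable tetrahedron\<close>

lemma gram_cofactors_pos:
  fixes A B C P Q R :: real
  assumes "A + Q + P < 0" "Q + C + R < 0" "0 < R"
    and "Q * Q < A * C" "R * R < B * C" "0 < A + B + C + 2 * P + 2 * Q + 2 * R"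
    and "0 \<le> B" "0 \<le> C"
  shows "0 < R * P - Q * B" "0 < Q * R - C * P" "0 < P * Q - R * A"
proof -
  define q where "q = - Q"
  define p where "p = - P"
  have "0 < C"
    using assms(3,5,7,8) by (smt (verit) mult_nonneg_nonneg zero_less_mult_iff)
  have q_gt: "R + C < q"
    using assms(2) by (simp add: q_def)
  then have "0 < q"
    using assms(3) \<open>0 < C\<close> by linarith
  have qq: "q * q < A * C"
    using assms(4) by (simp add: q_def)
  have "q * C < q * q"
    using q_gt \<open>0 < q\<close> assms(3) by (simp add: mult_strict_left_mono)
  with qq have "q * C < A * C"
    by linarith
  with \<open>0 < C\<close> have "q < A"
    by simp
  have p_gt: "A - q < p"
    using assms(1) by (simp add: p_def q_def)
  have "C * (A - q) < C * p"
    using p_gt \<open>0 < C\<close> by (simp add: mult_strict_left_mono)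
  moreover have "q * R < q * (q - C)"
    using q_gt \<open>0 < q\<close> by (simp add: mult_strict_left_mono)
  ultimately show "0 < Q * R - C * P"
    using qq by (simp add: p_def q_def algebra_simps)
  have "(A - q) * q < p * q"
    using p_gt \<open>0 < q\<close> by (simp add: mult_strict_right_mono)
  moreover have "A * C < A * (q - R)"
    using q_gt \<open>q < A\<close> \<open>0 < q\<close> by (simp add: mult_strict_left_mono)
  ultimately show "0 < P * Q - R * A"
    using qq by (simp add: p_def q_def algebra_simps)
  have "p < B + R"
    using assms(1,2,6) by (simp add: p_def)
  then have "R * p < R * (B + R)"
    using assms(3) by (simp add: mult_strict_left_mono)
  moreover have "(R + C) * B \<le> q * B"
    using q_gt assms(7) by (simp add: mult_right_mono)
  ultimately show "0 < R * P - Q * B"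
    using assms(5) by (simp add: p_def q_def algebra_simps)
qed

lemma cross_products_acute:
  fixes u v w :: "real^3"
  assumes "(u + v + w) \<bullet> u < 0" "(u + v + w) \<bullet> v < 0" "0 < v \<bullet> w" "u \<bullet> (v \<times> w) \<noteq> 0"
  shows "0 < (v \<times> w) \<bullet> (w \<times> u)" "0 < (v \<times> w) \<bullet> (u \<times> v)" "0 < (w \<times> u) \<bullet> (u \<times> v)"
proof -
  have "u \<times> v \<noteq> 0" "v \<times> w \<noteq> 0"
    using assms(4) cross_triple[of u v w] by (auto simp: inner_commute)
  then have "0 < (u \<times> v) \<bullet> (u \<times> v)" "0 < (v \<times> w) \<bullet> (v \<times> w)"
    by simp_all
  then have "(u \<bullet> v) * (u \<bullet> v) < (u \<bullet> u) * (v \<bullet> v)" "(v \<bullet> w) * (v \<bullet> w) < (v \<bullet> v) * (w \<bullet> w)"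
    by (simp_all add: dot_cross inner_commute)
  moreover have "u + v + w \<noteq> 0"
  proof
    assume "u + v + w = 0"
    then have "w = - u - v"
      by (simp add: algebra_simps eq_neg_iff_add_eq_0)
    with assms(4) show False
      by (simp add: Cross3.right_diff_distrib dot_cross_self)
  qed
  then have "0 < (u + v + w) \<bullet> (u + v + w)"
    by simp
  ultimately have "0 < (w \<bullet> v) * (u \<bullet> w) - (u \<bullet> v) * (w \<bullet> w)"
      "0 < (u \<bullet> v) * (w \<bullet> v) - (v \<bullet> v) * (u \<bullet> w)"
      "0 < (u \<bullet> w) * (u \<bullet> v) - (w \<bullet> v) * (u \<bullet> u)"
    using gram_cofactors_pos[of "u \<bullet> u" "u \<bullet> v" "u \<bullet> w" "v \<bullet> v" "w \<bullet> v" "w \<bullet> w"] assms(1-3)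
    by (simp_all add: inner_commute algebra_simps)
  then show "0 < (v \<times> w) \<bullet> (w \<times> u)" "0 < (v \<times> w) \<bullet> (u \<times> v)" "0 < (w \<times> u) \<bullet> (u \<times> v)"
    by (simp_all add: dot_cross inner_commute algebra_simps)
qed

lemma card_3_sorted:
  fixes h :: "'a \<Rightarrow> 'b::linorder"
  assumes "card A = 3"
  obtains x y z where "A = {x, y, z}" "distinct [x, y, z]" "h x \<le> h y" "h y \<le> h z"
proof -
  obtain p q s where "A = {p, q, s}" "distinct [p, q, s]"
    using assms by (auto simp: card_3_iff)
  define l where "l = sort_key h [p, q, s]"
  have "length l = 3"
    unfolding l_def length_sort by simp
  then obtain x y z where l: "l = [x, y, z]"
    by (auto simp: numeral_eq_Suc length_Suc_conv)
  have "set l = A"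
    unfolding l_def set_sort \<open>A = {p, q, s}\<close> by simp
  moreover have "distinct l"
    unfolding l_def distinct_sort by fact
  moreover have "sorted (map h l)"
    unfolding l_def by (rule sorted_sort_key)
  ultimately show ?thesis
    unfolding l by (intro that) auto
qed

lemma descent_star_or_path:
  fixes h :: "'a \<Rightarrow> 'b::linorder"
  assumes "distinct [r, x, y, z]" "h x \<le> h y" "h y \<le> h z" "symp R"
    and descent: "\<And>u. u \<in> {x, y, z} \<Longrightarrow> \<exists>w\<in>{r, x, y, z}. R u w \<and> h w < h u"
  obtains (star) a where "a \<in> {r, x, y, z}" "\<forall>b\<in>{r, x, y, z} - {a}. R a b"
  | (path) a b c d where "{a, b, c, d} = {r, x, y, z}" "distinct [a, b, c, d]" "R b a" "R b c" "R c d"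
proof -
  have sym: "R p q \<Longrightarrow> R q p" for p q
    using \<open>symp R\<close> by (rule sympD)
  have "R x r"
    using descent[of x] assms(2,3) by auto
  moreover have "R y r \<or> R y x"
    using descent[of y] assms(3) by auto
  moreover have "R z r \<or> R z x \<or> R z y"
    using descent[of z] by auto
  ultimately consider "R y r" "R z r" | "R y r" "R z x" | "R y r" "R z y"
    | "R y x" "R z r" | "R y x" "R z x" | "R y x" "R z y"
    by blast
  then show ?thesis
  proof cases
    case 1
    then show ?thesis using star[of r] \<open>R x r\<close> sym by auto
  next
    case 2
    then show ?thesis using path[of y r x z] \<open>R x r\<close> assms(1) sym by auto
  next
    case 3
    then show ?thesis using path[of x r y z] \<open>R x r\<close> assms(1) sym by auto
  next
    case 4
    then show ?thesis using path[of y x r z] \<open>R x r\<close> assms(1) sym by auto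
  next
    case 5
    then show ?thesis using star[of x] \<open>R x r\<close> sym by auto
  next
    case 6
    then show ?thesis using path[of r x y z] \<open>R x r\<close> assms(1) sym by auto
  qed
qed

locale tetrahedron = simplex_gradients V g for V :: "(real^3) set" and g :: "real^3 \<Rightarrow> real^3"
begin

lemma card_tetrahedron: "card V = 4"
  using card_V by simp

definition facet_distance :: "real^3 \<Rightarrow> real^3 \<Rightarrow> real" where
  "facet_distance y z = bary y z / norm (g y)"

lemma equilibrium_on_facet:
  assumes "u \<in> V" "0 < k" "bary u q = 0" "\<And>w. w \<in> V - {u} \<Longrightarrow> 0 < bary w q"
  shows "equilibrium_on (convex hull V) (q + k *\<^sub>R g u) (convex hull (V - {u}))"
proof -
  have "q \<in> rel_interior (convex hull (V - {u}))"
    using assms(1,3,4) by (rule rel_interior_facet)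
  moreover have "convex hull (V - {u}) \<subseteq> convex hull V"
    by (rule hull_mono) auto
  ultimately have "q \<in> convex hull V"
    using rel_interior_subset by blast
  moreover have "q \<noteq> q + k *\<^sub>R g u"
    using assms(1,2) gradient_nonzero by auto
  moreover have "(x - q) \<bullet> (q - (q + k *\<^sub>R g u)) \<le> 0" if "x \<in> convex hull V" for x
  proof -
    have "(x - q) \<bullet> (q - (q + k *\<^sub>R g u)) = - k * bary u x"
      using bary_diff[of u x q] assms(3) by (simp add: inner_commute)
    with bary_nonneg[OF that assms(1)] assms(2) show ?thesis
      by simp
  qed
  ultimately show ?thesis
    using \<open>q \<in> rel_interior (convex hull (V - {u}))\<close>
    unfolding equilibrium_on_def perp_plane_supports_def by blast
qed

lemma facet_equilibrium_or_descent:
  assumes C: "C \<in> interior (convex hull V)" and "u \<in> V"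
    and "\<not> equilibrium_on (convex hull V) C (convex hull (V - {u}))"
  obtains w where "w \<in> V" "0 < g u \<bullet> g w" "facet_distance w C < facet_distance u C"
proof -
  define k where "k = bary u C / (g u \<bullet> g u)"
  define q where "q = C - k *\<^sub>R g u" \<comment> \<open>the foot of the perpendicular from \<open>C\<close> to the facet plane\<close>
  have "0 < k"
    using bary_pos_interior[OF C \<open>u \<in> V\<close>] gradient_nonzero[OF \<open>u \<in> V\<close>] by (simp add: k_def)
  have bary_q: "bary y q = bary y C - k * (g y \<bullet> g u)" for y
    using bary_diff[of y q C] by (simp add: q_def)
  have "bary u q = 0"
    using gradient_nonzero[OF \<open>u \<in> V\<close>] by (simp add: bary_q k_def)
  moreover have "C = q + k *\<^sub>R g u"
    by (simp add: q_def)
  ultimately obtain w where w: "w \<in> V - {u}" "bary w q \<le> 0"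
    using equilibrium_on_facet[OF \<open>u \<in> V\<close> \<open>0 < k\<close>] assms(3) by (metis not_less)
  then have "0 < bary w C" "bary w C \<le> k * (g w \<bullet> g u)"
    using bary_pos_interior[OF C] by (auto simp: bary_q)
  then have "0 < g u \<bullet> g w"
    using \<open>0 < k\<close> by (metis inner_commute less_le_trans zero_less_mult_pos)
  have "g w \<bullet> g u < norm (g w) * norm (g u)"
    using w \<open>u \<in> V\<close> by (intro gradients_not_parallel) auto
  with \<open>bary w C \<le> k * (g w \<bullet> g u)\<close> \<open>0 < k\<close>
  have "bary w C < k * (norm (g w) * norm (g u))"
    by (smt (verit) mult_strict_left_mono)
  also have "\<dots> = bary u C * norm (g w) / norm (g u)"
    using gradient_nonzero[OF \<open>u \<in> V\<close>] by (simp add: k_def power2_norm_eq_inner[symmetric] power2_eq_square)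
  finally have "facet_distance w C < facet_distance u C"
    using gradient_nonzero w by (simp add: facet_distance_def field_simps)
  with w \<open>0 < g u \<bullet> g w\<close> show ?thesis
    using that by blast
qed

lemma monostable_descent:
  assumes "monostable (convex hull V) C"
  obtains r where "r \<in> V"
    "\<And>u. u \<in> V \<Longrightarrow> u \<noteq> r \<Longrightarrow> \<exists>w\<in>V. 0 < g u \<bullet> g w \<and> facet_distance w C < facet_distance u C"
proof -
  have C: "C \<in> interior (convex hull V)"
    using assms by (simp add: monostable_def weighted_polyhedron_def)
  obtain F where F: "\<And>F'. F' face_of convex hull V \<Longrightarrow> aff_dim F' = 2 \<Longrightarrow>
      equilibrium_on (convex hull V) C F' \<Longrightarrow> F' = F"
    using assms unfolding monostable_def by metis
  obtain r where "r \<in> V" and r: "\<And>u. u \<in> V \<Longrightarrow> convex hull (V - {u}) = F \<Longrightarrow> u = r"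
  proof (cases "\<exists>r\<in>V. convex hull (V - {r}) = F")
    case True
    then show ?thesis
      using that facet_inj by metis
  next
    case False
    obtain r where "r \<in> V"
      using card_tetrahedron by fastforce
    with False that show ?thesis by blast
  qed
  have "\<exists>w\<in>V. 0 < g u \<bullet> g w \<and> facet_distance w C < facet_distance u C"
    if "u \<in> V" "u \<noteq> r" for u
  proof -
    have "\<not> equilibrium_on (convex hull V) C (convex hull (V - {u}))"
      using F[OF facet_face[OF \<open>u \<in> V\<close>]] aff_dim_facet[OF \<open>u \<in> V\<close>] r that by force
    then show ?thesis
      using facet_equilibrium_or_descent[OF C \<open>u \<in> V\<close>] by blast
  qed
  with \<open>r \<in> V\<close> that show ?thesis by blast
qed

lemma cross_gradients_eq:
  assumes "V = {a, b, c, d}" "distinct [a, b, c, d]"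
  shows "(g a \<bullet> (g c \<times> g d)) *\<^sub>R (a - b) = g c \<times> g d"
proof -
  have "g c \<times> g d = (\<Sum>y\<in>V - {b}. (g y \<bullet> (g c \<times> g d)) *\<^sub>R (y - b))"
    using assms(1) by (intro edge_expansion) simp
  also have "\<dots> = (\<Sum>y\<in>{a, c, d}. (g y \<bullet> (g c \<times> g d)) *\<^sub>R (y - b))"
    using assms by (intro sum.cong) auto
  also have "\<dots> = (g a \<bullet> (g c \<times> g d)) *\<^sub>R (a - b)"
    using assms(2) by (simp add: dot_cross_self)
  finally show ?thesis ..
qed

lemma acute_vertex_of_path:
  assumes "V = {a, b, c, d}" "distinct [a, b, c, d]"
    and "0 < g b \<bullet> g a" "0 < g b \<bullet> g c" "0 < g c \<bullet> g d"
  shows "acute_vertex V b"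
proof -
  \<comment> \<open>The edges at \<open>b\<close> form the basis dual to \<open>g a, g c, g d\<close>, given by cross products.\<close>
  define D where "D = g a \<bullet> (g c \<times> g d)"
  have ea: "D *\<^sub>R (a - b) = g c \<times> g d"
    unfolding D_def using assms(1,2) by (rule cross_gradients_eq)
  have "(g c \<bullet> (g d \<times> g a)) *\<^sub>R (c - b) = g d \<times> g a"
    using assms(1,2) by (intro cross_gradients_eq) auto
  then have ec: "D *\<^sub>R (c - b) = g d \<times> g a"
    using cross_triple[of "g c" "g d" "g a"] by (simp add: D_def inner_commute)
  have "(g d \<bullet> (g a \<times> g c)) *\<^sub>R (d - b) = g a \<times> g c"
    using assms(1,2) by (intro cross_gradients_eq) auto
  then have ed: "D *\<^sub>R (d - b) = g a \<times> g c"
    using cross_triple[of "g a" "g c" "g d"] by (simp add: D_def inner_commute)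
  have "D \<noteq> 0"
  proof
    assume "D = 0"
    have "(c - b) \<times> (g c \<times> g d) = - g d"
      using assms(1,2) by (simp add: Lagrange inner_commute gradient_inner_edge)
    with ea \<open>D = 0\<close> gradient_nonzero[of d] assms(1) show False
      by simp
  qed
  have "g a + g b + g c + g d = 0"
    using sum_gradients assms(1,2) by (simp add: add.assoc)
  then have "g a + g c + g d = - g b"
    by (simp add: eq_neg_iff_add_eq_0 ac_simps)
  then have "(g a + g c + g d) \<bullet> g a < 0" "(g a + g c + g d) \<bullet> g c < 0"
    using assms(3,4) by simp_all
  from cross_products_acute[OF this assms(5) \<open>D \<noteq> 0\<close>[unfolded D_def]]
  have "0 < (D * D) * ((a - b) \<bullet> (c - b))" "0 < (D * D) * ((a - b) \<bullet> (d - b))"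
      "0 < (D * D) * ((c - b) \<bullet> (d - b))"
    by (simp_all flip: ea ec ed add: inner_commute)
  then have "0 < (a - b) \<bullet> (c - b)" "0 < (a - b) \<bullet> (d - b)" "0 < (c - b) \<bullet> (d - b)"
    by (simp_all add: zero_less_mult_iff)
  with assms(1,2) show ?thesis
    by (auto simp: acute_vertex_def inner_commute)
qed

lemma monostable_two_acute_vertices:
  assumes "monostable (convex hull V) C"
  obtains b c where "b \<in> V" "c \<in> V" "b \<noteq> c" "acute_vertex V b" "acute_vertex V c"
proof -
  let ?R = "\<lambda>p q. 0 < g p \<bullet> g q" and ?h = "\<lambda>y. facet_distance y C"
  obtain r where "r \<in> V" and descent:
    "\<And>u. u \<in> V \<Longrightarrow> u \<noteq> r \<Longrightarrow> \<exists>w\<in>V. ?R u w \<and> ?h w < ?h u"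
    using monostable_descent[OF assms] by blast
  have "card (V - {r}) = 3"
    using card_tetrahedron finite_V \<open>r \<in> V\<close> by simp
  then obtain x y z where xyz: "V - {r} = {x, y, z}" "distinct [x, y, z]" "?h x \<le> ?h y" "?h y \<le> ?h z"
    by (rule card_3_sorted)
  then have V: "V = {r, x, y, z}" "distinct [r, x, y, z]"
    using \<open>r \<in> V\<close> by auto
  have "symp ?R"
    by (simp add: symp_def inner_commute)
  moreover have "\<exists>w\<in>{r, x, y, z}. ?R u w \<and> ?h w < ?h u" if "u \<in> {x, y, z}" for u
    using descent[of u] that V by auto
  ultimately show ?thesis
  proof (rule descent_star_or_path[OF V(2) xyz(3,4)])
    fix a assume "a \<in> {r, x, y, z}" and star: "\<forall>b\<in>{r, x, y, z} - {a}. ?R a b"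
    then obtain b where "b \<in> V" "b \<noteq> a" "g a \<bullet> g b < 0"
      using gradient_inner_neg V(1) by blast
    moreover from this have "0 < g a \<bullet> g b"
      using star V(1) by blast
    ultimately show ?thesis
      by linarith
  next
    fix a b c d
    assume path: "{a, b, c, d} = {r, x, y, z}" "distinct [a, b, c, d]" "?R b a" "?R b c" "?R c d"
    then have V': "V = {a, b, c, d}" "V = {d, c, b, a}"
      using V(1) by auto
    have "acute_vertex V b"
      using V'(1) path(2-5) by (rule acute_vertex_of_path)
    moreover have "acute_vertex V c"
      using V'(2) path(2-5) acute_vertex_of_path[of d c b a] by (auto simp: inner_commute)
    ultimately show ?thesis
      using that[of b c] V'(1) path(2) by simp
  qed
qed

end

theorem theorem1p7:
  fixes T :: "(real^3) set"
  assumes "3 simplex T"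
  shows "\<not> (\<exists>C C'. C \<in> interior T \<and> C' \<in> interior T \<and> monostable T C \<and> mono_unstable T C')"
proof
  assume "\<exists>C C'. C \<in> interior T \<and> C' \<in> interior T \<and> monostable T C \<and> mono_unstable T C'"
  then obtain C C' where "monostable T C" "mono_unstable T C'"
    by blast
  obtain V where V: "\<not> affine_dependent V" "int (card V) = 3 + 1" "T = convex hull V"
    using assms unfolding simplex_def by blast
  then have "aff_dim V = DIM(real^3)"
    using aff_dim_affine_independent[OF V(1)] by simp
  then obtain g where "tetrahedron V g"
    using simplex_gradients_exist[OF V(1)] unfolding tetrahedron_def by blast
  then obtain b c where "b \<in> V" "c \<in> V" "b \<noteq> c" "acute_vertex V b" "acute_vertex V c"
    using \<open>monostable T C\<close> unfolding V(3) by (rule tetrahedron.monostable_two_acute_vertices)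
  with mono_unstable_acute_vertex_unique[OF V(1)] \<open>mono_unstable T C'\<close> V(3) show False
    by blast
qed

end
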